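(* Fix non-negative integers $r$ and $m>r$. Let $b_j=(1^j,2^j,\dots,m^j)^T\in\mathbb{R}^m$ for $j=0,\dots,r$, and let $\tilde b_0,\dots,\tilde b_r$ be obtained by Gram–Schmidt orthogonalization (without normalization) of the ordered set $b_0,\dots,b_r$, i.e. $\tilde b_j=b_j-\Pi_{j-1}b_j$ where $\Pi_{j-1}$ is the orthogonal projection onto $\mathrm{Span}(b_0,\dots,b_{j-1})$ (and $\tilde b_0=b_0$). Then there is a constant $c_r>0$ depending only on $r$ such that for every $j\in\{0,\dots,r\}$, $$\|\tilde b_j\|^2\ge c_r\,m^{2j+1}.$$ *)

theory Defs
  imports "Jordan_Normal_Form.Gram_Schmidt"
begin

definition power_vec :: "nat \<Rightarrow> nat \<Rightarrow> real vec" where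
  "power_vec m j = vec m (\<lambda>i. real (i + 1) ^ j)"

definition power_vecs :: "nat \<Rightarrow> nat \<Rightarrow> real vec list" where
  "power_vecs m r = map (power_vec m) [0..<Suc r]"

text \<open>Unnormalized Gram-Schmidt orthogonalization (library algorithm):
  tilde b_j = b_j - sum_{k<j} (<b_j, tilde b_k>/<tilde b_k, tilde b_k>) tilde b_k.\<close>
definition gs_power_vecs :: "nat \<Rightarrow> nat \<Rightarrow> real vec list" where
  "gs_power_vecs m r = gram_schmidt m (power_vecs m r)"

end

theory Submission
  imports Defs
begin

text \<open>Gram-Schmidt only subtracts multiples of earlier vectors, so the entries of
  \<open>tilde b_j\<close> are \<open>p(1), ..., p(m)\<close> for a monic polynomial \<open>p\<close> of degree \<open>j\<close>.
  Let \<open>L = m div (j+1)\<close>. For every offset \<open>s < L\<close> the points \<open>s+1, s+1+L, ..., s+1+jL\<close>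
  lie in \<open>{1..m}\<close>, and \<open>\<Sum>k\<le>j. p(s+1+kL)^2 \<ge> 4^-j L^2j\<close>: the difference
  \<open>p(x+L) - p(x)\<close> has degree \<open>j-1\<close> and leading coefficient \<open>jL\<close>, and
  \<open>(u-v)^2 \<le> 2u^2 + 2v^2\<close> costs a factor 4 per differencing, so induction on \<open>j\<close> applies.
  Summing over the \<open>L\<close> offsets gives \<open>|tilde b_j|^2 \<ge> 4^-j L^(2j+1)\<close>, and \<open>L \<ge> m/(2(j+1))\<close>.\<close>

lemma sum_squares_diff_le:
  fixes F :: "nat \<Rightarrow> real"
  shows "(\<Sum>k\<le>j. (F (Suc k) - F k)^2) \<le> 4 * (\<Sum>k\<le>Suc j. (F k)^2)"
proof -
  have "(F (Suc k) - F k)^2 \<le> 2 * (F (Suc k))^2 + 2 * (F k)^2" for k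
    using zero_le_power2[of "F (Suc k) + F k"] by (simp add: power2_eq_square algebra_simps)
  then have "(\<Sum>k\<le>j. (F (Suc k) - F k)^2) \<le> (\<Sum>k\<le>j. 2 * (F (Suc k))^2 + 2 * (F k)^2)"
    by (rule sum_mono)
  also have "\<dots> = 2 * (\<Sum>k\<le>j. (F (Suc k))^2) + 2 * (\<Sum>k\<le>j. (F k)^2)"
    by (simp add: sum.distrib sum_distrib_left)
  also have "\<dots> \<le> 2 * (\<Sum>k\<le>Suc j. (F k)^2) + 2 * (\<Sum>k\<le>Suc j. (F k)^2)"
  proof (intro add_mono mult_left_mono)
    show "(\<Sum>k\<le>j. (F (Suc k))^2) \<le> (\<Sum>k\<le>Suc j. (F k)^2)"
      unfolding sum.atMost_Suc_shift[where n = j] by simp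
  qed simp_all
  finally show ?thesis by simp
qed

lemma sum_poly_shift_diff:
  fixes a :: "nat \<Rightarrow> real"
  shows "(\<Sum>n\<le>Suc j. a n * (x + L)^n) - (\<Sum>n\<le>Suc j. a n * x^n)
       = (\<Sum>k\<le>j. (\<Sum>n=Suc k..Suc j. a n * real (n choose k) * L^(n-k)) * x^k)"
proof -
  have binomial: "(x + L)^n - x^n = (\<Sum>k<n. real (n choose k) * x^k * L^(n-k))" for n
    by (simp add: binomial_ring lessThan_Suc_atMost[symmetric])
  have "(\<Sum>n\<le>Suc j. a n * (x + L)^n) - (\<Sum>n\<le>Suc j. a n * x^n)
      = (\<Sum>n\<le>Suc j. \<Sum>k<n. a n * real (n choose k) * L^(n-k) * x^k)"
    unfolding sum_subtractf[symmetric] right_diff_distrib[symmetric]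
    by (rule sum.cong) (simp_all add: binomial sum_distrib_left mult_ac)
  also have "\<dots> = (\<Sum>k<Suc j. \<Sum>n=Suc k..Suc j. a n * real (n choose k) * L^(n-k) * x^k)"
    by (rule sum.nested_swap')
  finally show ?thesis
    by (simp only: lessThan_Suc_atMost sum_distrib_right)
qed

lemma sum_squares_poly_arith_prog_ge:
  fixes a :: "nat \<Rightarrow> real" and x L :: real
  shows "(1/4)^j * (a j)^2 * L^(2*j) \<le> (\<Sum>k\<le>j. (\<Sum>n\<le>j. a n * (x + real k * L)^n)^2)"
proof (induction j arbitrary: a x)
  case 0
  show ?case by simp
next
  case (Suc j)
  define f where "f y = (\<Sum>n\<le>Suc j. a n * y^n)" for y
  define b where "b k = (\<Sum>n=Suc k..Suc j. a n * real (n choose k) * L^(n-k))" for k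
  \<comment> \<open>the coefficients of \<open>y \<mapsto> f (y + L) - f y\<close>, to which the induction hypothesis applies\<close>
  have difference: "(\<Sum>n\<le>j. b n * (x + real k * L)^n) = f (x + real (Suc k) * L) - f (x + real k * L)"
    for k
    using sum_poly_shift_diff[where x = "x + real k * L"] by (simp add: f_def b_def algebra_simps)
  have "c \<le> (real (Suc j))^2 * c" if "0 \<le> c" for c :: real
    using that by (simp add: mult_le_cancel_right1)
  then have "(a (Suc j))^2 * L^(2 * Suc j) \<le> (real (Suc j))^2 * ((a (Suc j))^2 * L^(2 * Suc j))"
    using zero_le_even_power[of "2 * Suc j" L] by (simp del: power_Suc)
  also have "\<dots> = (b j)^2 * L^(2*j)"
    by (simp add: b_def power_mult_distrib power2_eq_square mult_ac)
  finally have leading: "(a (Suc j))^2 * L^(2 * Suc j) \<le> (b j)^2 * L^(2*j)" .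
  have "(1/4)^Suc j * (a (Suc j))^2 * L^(2 * Suc j) \<le> 1/4 * ((1/4)^j * (b j)^2 * L^(2*j))"
    using mult_left_mono[OF leading, of "(1/4)^Suc j"] by (simp add: mult_ac)
  also have "\<dots> \<le> 1/4 * (\<Sum>k\<le>j. (f (x + real (Suc k) * L) - f (x + real k * L))^2)"
    using Suc.IH[of b x] by (simp add: difference)
  also have "\<dots> \<le> (\<Sum>k\<le>Suc j. (f (x + real k * L))^2)"
    using sum_squares_diff_le[of "\<lambda>k. f (x + real k * L)" j] by simp
  finally show ?case by (simp add: f_def)
qed

lemma sum_squares_poly_blocks_ge:
  fixes a :: "nat \<Rightarrow> real"
  assumes "Suc j * L \<le> m"
  shows "(1/4)^j * (a j)^2 * real L^(2*j+1) \<le> (\<Sum>i<m. (\<Sum>n\<le>j. a n * real (i+1)^n)^2)"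
proof -
  define F where "F i = (\<Sum>n\<le>j. a n * real (i+1)^n)^2" for i
  have progression: "(1/4)^j * (a j)^2 * real L^(2*j) \<le> (\<Sum>k\<le>j. F (k*L + s))" for s
    using sum_squares_poly_arith_prog_ge[of j a "real L" "real (s+1)"]
    by (simp add: F_def algebra_simps)
  have "(1/4)^j * (a j)^2 * real L^(2*j+1) = (\<Sum>s<L. (1/4)^j * (a j)^2 * real L^(2*j))"
    by simp
  also have "\<dots> \<le> (\<Sum>s<L. \<Sum>k\<le>j. F (k*L + s))"
    by (rule sum_mono) (rule progression)
  also have "\<dots> = (\<Sum>k<Suc j. \<Sum>s<L. F (k*L + s))"
    by (simp add: sum.swap[of _ "{..<L}"] lessThan_Suc_atMost)
  also have "\<dots> = (\<Sum>k<Suc j. \<Sum>i\<in>{k*L..<k*L + L}. F i)"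
    by (simp add: sum.atLeastLessThan_shift_0 atLeast0LessThan comp_def)
  also have "\<dots> = (\<Sum>i<Suc j * L. F i)"
    by (rule sum.nat_group)
  also have "\<dots> \<le> (\<Sum>i<m. F i)"
    using assms by (intro sum_mono2) (auto simp: F_def)
  finally show ?thesis
    by (simp add: F_def)
qed

definition sum_squares_const :: "nat \<Rightarrow> real" where
  "sum_squares_const j = (1/4)^j / (2 * real (Suc j))^(2*j+1)"

lemma sum_squares_const_pos: "0 < sum_squares_const j"
  by (simp add: sum_squares_const_def)

lemma sum_squares_const_antimono:
  assumes "j \<le> r"
  shows "sum_squares_const r \<le> sum_squares_const j"
  unfolding sum_squares_const_def
proof (rule frac_le)
  show "(1/4::real)^r \<le> (1/4)^j"
    using assms by (intro power_decreasing) auto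
  have "(2 * real (Suc j))^(2*j+1) \<le> (2 * real (Suc r))^(2*j+1)"
    using assms by (intro power_mono) auto
  also have "\<dots> \<le> (2 * real (Suc r))^(2*r+1)"
    using assms by (intro power_increasing) auto
  finally show "(2 * real (Suc j))^(2*j+1) \<le> (2 * real (Suc r))^(2*r+1)" .
qed auto

lemma sum_squares_poly_ge:
  fixes a :: "nat \<Rightarrow> real"
  assumes "j < m"
  shows "sum_squares_const j * (a j)^2 * real m^(2*j+1) \<le> (\<Sum>i<m. (\<Sum>n\<le>j. a n * real (i+1)^n)^2)"
proof -
  define L where "L = m div Suc j"
  have "0 < L"
    using assms by (simp add: L_def div_greater_zero_iff)
  then have "Suc j \<le> Suc j * L"
    by (metis One_nat_def Suc_leI mult_le_mono2 nat_mult_1_right)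
  moreover have "m < Suc j * L + Suc j"
    using mult_div_mod_eq[of "Suc j" m] mod_less_divisor[of "Suc j" m]
    unfolding L_def by linarith
  ultimately have "real m \<le> real (2 * Suc j * L)"
    by linarith
  then have "real m / (2 * real (Suc j)) \<le> real L"
    by (simp add: divide_le_eq algebra_simps)
  then have "(1/4)^j * (a j)^2 * (real m / (2 * real (Suc j)))^(2*j+1)
      \<le> (1/4)^j * (a j)^2 * real L^(2*j+1)"
    by (intro mult_left_mono power_mono) auto
  also have "\<dots> \<le> (\<Sum>i<m. (\<Sum>n\<le>j. a n * real (i+1)^n)^2)"
    unfolding L_def by (rule sum_squares_poly_blocks_ge) (rule times_div_less_eq_dividend)
  finally show ?thesis
    by (simp add: sum_squares_const_def power_divide mult_ac)
qed

definition poly_vecs :: "nat \<Rightarrow> nat \<Rightarrow> real vec set" where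
  "poly_vecs m d = {v. dim_vec v = m \<and> (\<exists>a. \<forall>i<m. v $ i = (\<Sum>n<d. a n * real (i+1)^n))}"

lemma zero_mem_poly_vecs: "0\<^sub>v m \<in> poly_vecs m d"
  unfolding poly_vecs_def by (auto intro!: exI[of _ "\<lambda>_. 0"])

lemma add_mem_poly_vecs:
  assumes "u \<in> poly_vecs m d" "v \<in> poly_vecs m d"
  shows "u + v \<in> poly_vecs m d"
proof -
  from assms obtain a b where "dim_vec u = m" "\<forall>i<m. u $ i = (\<Sum>n<d. a n * real (i+1)^n)"
    and "dim_vec v = m" "\<forall>i<m. v $ i = (\<Sum>n<d. b n * real (i+1)^n)"
    unfolding poly_vecs_def by auto
  then show ?thesis
    unfolding poly_vecs_def
    by (auto intro!: exI[of _ "\<lambda>n. a n + b n"] simp: sum.distrib distrib_right)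
qed

lemma smult_mem_poly_vecs:
  assumes "v \<in> poly_vecs m d"
  shows "c \<cdot>\<^sub>v v \<in> poly_vecs m d"
proof -
  from assms obtain a where "dim_vec v = m" "\<forall>i<m. v $ i = (\<Sum>n<d. a n * real (i+1)^n)"
    unfolding poly_vecs_def by auto
  then show ?thesis
    unfolding poly_vecs_def
    by (auto intro!: exI[of _ "\<lambda>n. c * a n"] simp: sum_distrib_left mult_ac)
qed

lemma poly_vecs_mono_Suc: "poly_vecs m d \<subseteq> poly_vecs m (Suc d)"
proof
  fix v assume "v \<in> poly_vecs m d"
  then obtain a where "dim_vec v = m" "\<forall>i<m. v $ i = (\<Sum>n<d. a n * real (i+1)^n)"
    unfolding poly_vecs_def by auto
  then show "v \<in> poly_vecs m (Suc d)"
    unfolding poly_vecs_def by (auto intro!: exI[of _ "a(d := 0)"])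
qed

lemma power_vec_mem_poly_vecs: "power_vec m d \<in> poly_vecs m (Suc d)"
  unfolding poly_vecs_def power_vec_def
  by (auto intro!: exI[of _ "\<lambda>n. if n = d then 1 else 0"])

lemma adjuster_mem_poly_vecs: "set us \<subseteq> poly_vecs m d \<Longrightarrow> adjuster m w us \<in> poly_vecs m d"
  by (induction us) (auto intro!: add_mem_poly_vecs smult_mem_poly_vecs zero_mem_poly_vecs)

lemma gram_schmidt_sub2_power_vecs:
  assumes "set us \<subseteq> poly_vecs m k" and "t < l"
  shows "\<exists>w\<in>poly_vecs m (k+t).
    gram_schmidt_sub2 m us (map (power_vec m) [k..<k+l]) ! t = w + power_vec m (k+t)"
  using assms
proof (induction l arbitrary: k us t)
  case 0
  then show ?case by simp
next
  case (Suc l)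
  define u where "u = adjuster m (power_vec m k) us + power_vec m k"
  have adjuster_mem: "adjuster m (power_vec m k) us \<in> poly_vecs m k"
    using Suc.prems(1) by (rule adjuster_mem_poly_vecs)
  have gs_Cons: "gram_schmidt_sub2 m us (map (power_vec m) [k..<k+Suc l])
      = u # gram_schmidt_sub2 m (u # us) (map (power_vec m) [Suc k..<Suc k + l])"
  proof -
    have "[k..<k+Suc l] = k # [Suc k..<Suc k + l]"
      by (simp add: upt_conv_Cons)
    then show ?thesis
      by (simp add: u_def Let_def)
  qed
  show ?case
  proof (cases t)
    case 0
    then show ?thesis using gs_Cons adjuster_mem u_def by auto
  next
    case (Suc t')
    have "u \<in> poly_vecs m (Suc k)"
      unfolding u_def
      using adjuster_mem poly_vecs_mono_Suc by (blast intro: add_mem_poly_vecs power_vec_mem_poly_vecs)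
    then have "set (u # us) \<subseteq> poly_vecs m (Suc k)"
      using Suc.prems(1) poly_vecs_mono_Suc by auto
    then obtain w where "w \<in> poly_vecs m (Suc k + t')"
      "gram_schmidt_sub2 m (u # us) (map (power_vec m) [Suc k..<Suc k + l]) ! t'
        = w + power_vec m (Suc k + t')"
      using Suc.IH[of "u # us" "Suc k" t'] Suc.prems(2) \<open>t = Suc t'\<close> by auto
    then show ?thesis
      using gs_Cons \<open>t = Suc t'\<close> by auto
  qed
qed

lemma gs_power_vecs_monic:
  assumes "j \<le> r"
  obtains a where "a j = 1" "dim_vec (gs_power_vecs m r ! j) = m"
    "\<forall>i<m. (gs_power_vecs m r ! j) $ i = (\<Sum>n\<le>j. a n * real (i+1)^n)"
proof -
  have "gs_power_vecs m r = gram_schmidt_sub2 m [] (map (power_vec m) [0..<0+Suc r])"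
    unfolding gs_power_vecs_def power_vecs_def gram_schmidt_code by simp
  moreover obtain w where "w \<in> poly_vecs m j"
    "gram_schmidt_sub2 m [] (map (power_vec m) [0..<0+Suc r]) ! j = w + power_vec m j"
    using gram_schmidt_sub2_power_vecs[of "[]" m 0 j "Suc r"] assms by auto
  ultimately obtain a where "gs_power_vecs m r ! j = w + power_vec m j" "dim_vec w = m"
    "\<forall>i<m. w $ i = (\<Sum>n<j. a n * real (i+1)^n)"
    unfolding poly_vecs_def by auto
  then show thesis
    by (intro that[of "a(j := 1)"]) (auto simp: power_vec_def lessThan_Suc_atMost[symmetric])
qed

theorem lemma9:
  fixes r :: nat
  shows "\<exists>c :: real. c > 0 \<and>
    (\<forall>m :: nat. m > r \<longrightarrow>
      (\<forall>j \<le> r. (gs_power_vecs m r ! j) \<bullet> (gs_power_vecs m r ! j) \<ge> c * real m ^ (2 * j + 1)))"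
proof (intro exI[of _ "sum_squares_const r"] conjI allI impI)
  show "0 < sum_squares_const r"
    by (rule sum_squares_const_pos)
  fix m j assume "r < m" and "j \<le> r"
  obtain a where "a j = 1" "dim_vec (gs_power_vecs m r ! j) = m"
    and entries: "\<forall>i<m. (gs_power_vecs m r ! j) $ i = (\<Sum>n\<le>j. a n * real (i+1)^n)"
    using gs_power_vecs_monic[OF \<open>j \<le> r\<close>] by blast
  have "sum_squares_const r * real m^(2*j+1) \<le> sum_squares_const j * (a j)^2 * real m^(2*j+1)"
    using sum_squares_const_antimono[OF \<open>j \<le> r\<close>] \<open>a j = 1\<close> by (simp add: mult_right_mono)
  also have "\<dots> \<le> (\<Sum>i<m. (\<Sum>n\<le>j. a n * real (i+1)^n)^2)"
    using \<open>r < m\<close> \<open>j \<le> r\<close> by (intro sum_squares_poly_ge) simp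
  also have "\<dots> = (gs_power_vecs m r ! j) \<bullet> (gs_power_vecs m r ! j)"
    using entries \<open>dim_vec (gs_power_vecs m r ! j) = m\<close>
    by (simp add: scalar_prod_def power2_eq_square atLeast0LessThan)
  finally show "sum_squares_const r * real m^(2*j+1) \<le> (gs_power_vecs m r ! j) \<bullet> (gs_power_vecs m r ! j)" .
qed

end
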